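(* Every graph admits a Helly EPG representation.
   Context: A grid is the set of integer points of the plane; a grid edge joins two grid points at distance $1$. A path in the grid is a sequence of distinct grid edges in which consecutive edges share exactly one grid point and non-consecutive edges share none. An EPG representation of a graph $G$ is a family $(P_v)_{v\in V(G)}$ of grid paths such that distinct $u,v$ are adjacent iff $P_u,P_v$ share a grid edge. It is Helly if every subfamily of pairwise edge-intersecting paths has a grid edge common to all its members. *)

theory Defs
  imports Main
begin

type_synonym grid_point = "int \<times> int"
type_synonym grid_edge = "grid_point set"

definition is_grid_edge :: "grid_edge \<Rightarrow> bool" where
  "is_grid_edge e \<longleftrightarrow> (\<exists>p q. e = {p, q} \<and>
     (fst p - fst q)^2 + (snd p - snd q)^2 = 1)"

definition is_grid_path :: "grid_edge list \<Rightarrow> bool" where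
  "is_grid_path es \<longleftrightarrow> es \<noteq> [] \<and> distinct es \<and>
     (\<forall>i < length es. is_grid_edge (es ! i)) \<and>
     (\<forall>i. i + 1 < length es \<longrightarrow> card (es ! i \<inter> es ! (i + 1)) = 1) \<and>
     (\<forall>i j. j < length es \<longrightarrow> i + 1 < j \<longrightarrow> es ! i \<inter> es ! j = {})"

definition simple_graph :: "'a set \<Rightarrow> ('a \<Rightarrow> 'a \<Rightarrow> bool) \<Rightarrow> bool" where
  "simple_graph V Adj \<longleftrightarrow> finite V \<and>
     (\<forall>u v. Adj u v \<longrightarrow> u \<in> V \<and> v \<in> V) \<and>
     (\<forall>u v. Adj u v \<longrightarrow> Adj v u) \<and> (\<forall>v. \<not> Adj v v)"

definition EPG_rep :: "'a set \<Rightarrow> ('a \<Rightarrow> 'a \<Rightarrow> bool) \<Rightarrow> ('a \<Rightarrow> grid_edge list) \<Rightarrow> bool" where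
  "EPG_rep V Adj P \<longleftrightarrow> (\<forall>v\<in>V. is_grid_path (P v)) \<and>
     (\<forall>u\<in>V. \<forall>v\<in>V. u \<noteq> v \<longrightarrow> (Adj u v \<longleftrightarrow> set (P u) \<inter> set (P v) \<noteq> {}))"

definition Helly_rep :: "'a set \<Rightarrow> ('a \<Rightarrow> grid_edge list) \<Rightarrow> bool" where
  "Helly_rep V P \<longleftrightarrow> (\<forall>S \<subseteq> V.
     (\<forall>u\<in>S. \<forall>v\<in>S. set (P u) \<inter> set (P v) \<noteq> {}) \<longrightarrow>
     (\<exists>e. is_grid_edge e \<and> (\<forall>v\<in>S. e \<in> set (P v))))"

end

theory Submission
  imports Defs
begin

(* Give the vertices distinct rows below a top row T and list the cliques of the graph as
   K_0, ..., K_(m-1). The path of v runs from left to right along its own row and, at the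
   column pair 2c, 2c+1, makes a detour up to row T and back down whenever v belongs to K_c,
   so the paths form combs with one tooth per clique. Edges on different rows are distinct
   and each tooth edge determines its clique, so two paths share an edge only inside a tooth
   of a common clique; hence they meet iff their vertices are adjacent. A family of pairwise
   meeting paths therefore belongs to a clique K_c, and all its paths contain the top edge
   of tooth c. *)

fun path_edges :: "grid_point list \<Rightarrow> grid_edge list" where
  "path_edges (a # b # ps) = {a, b} # path_edges (b # ps)"
| "path_edges _ = []"

lemma length_path_edges: "length (path_edges ps) = length ps - 1"
  by (induction ps rule: path_edges.induct) auto

lemma nth_path_edges: "Suc i < length ps \<Longrightarrow> path_edges ps ! i = (!) ps ` {i, Suc i}"
proof (induction ps arbitrary: i rule: path_edges.induct)
  case (1 a b ps)
  then show ?case by (cases i) auto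
qed auto

lemma path_edges_append:
  "xs \<noteq> [] \<Longrightarrow> ys \<noteq> [] \<Longrightarrow> path_edges (xs @ ys) = path_edges xs @ {last xs, hd ys} # path_edges ys"
  by (induction xs rule: induct_list012) (auto simp: neq_Nil_conv)

lemma set_path_edges_append:
  "set (path_edges xs) \<union> set (path_edges ys) \<subseteq> set (path_edges (xs @ ys))"
  by (cases "xs = []"; cases "ys = []") (auto simp: path_edges_append)

lemma doubleton_in_path_edges: "{a, b} \<in> set (path_edges (xs @ a # b # ys))"
  using set_path_edges_append[of xs "a # b # ys"] by auto

lemma ball_path_edges_iff_successively:
  "(\<forall>e\<in>set (path_edges ps). R e) \<longleftrightarrow> successively (\<lambda>a b. R {a, b}) ps"
  by (induction ps rule: path_edges.induct) auto

lemma is_grid_path_path_edges: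
  assumes "distinct ps" and "2 \<le> length ps" and "successively (\<lambda>a b. is_grid_edge {a, b}) ps"
  shows "is_grid_path (path_edges ps)"
proof -
  \<comment> \<open>the points are distinct, so edges intersect exactly as their index pairs do\<close>
  let ?I = "\<lambda>i. {i, Suc i}"
  have inj: "inj_on ((!) ps) {..<length ps}"
    using assms(1) by (simp add: inj_on_nth)
  have edge: "path_edges ps ! i = (!) ps ` ?I i" if "i < length (path_edges ps)" for i
    using that by (simp add: length_path_edges nth_path_edges)
  have index: "?I i \<subseteq> {..<length ps}" if "i < length (path_edges ps)" for i
    using that by (auto simp: length_path_edges)
  have meet: "path_edges ps ! i \<inter> path_edges ps ! j = (!) ps ` (?I i \<inter> ?I j)"
    if "i < length (path_edges ps)" "j < length (path_edges ps)" for i j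
    using inj_on_image_Int[OF inj index[OF that(1)] index[OF that(2)]] by (simp only: edge that)
  have "distinct (path_edges ps)"
    unfolding distinct_conv_nth
  proof (intro allI impI)
    fix i j assume i: "i < length (path_edges ps)" and j: "j < length (path_edges ps)" and "i \<noteq> j"
    then have "?I i \<noteq> ?I j" by (auto simp: doubleton_eq_iff)
    then show "path_edges ps ! i \<noteq> path_edges ps ! j"
      using inj_on_image_eq_iff[OF inj index[OF i] index[OF j]] by (simp only: edge i j) simp
  qed
  moreover have "card (path_edges ps ! i \<inter> path_edges ps ! (i + 1)) = 1"
    if "i + 1 < length (path_edges ps)" for i
    using that meet[of i "i + 1"] by auto
  moreover have "path_edges ps ! i \<inter> path_edges ps ! j = {}"
    if "j < length (path_edges ps)" "i + 1 < j" for i j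
    using that meet[of i j] by auto
  moreover have "\<forall>e\<in>set (path_edges ps). is_grid_edge e"
    using assms(3) by (simp add: ball_path_edges_iff_successively)
  moreover have "path_edges ps \<noteq> []"
    using assms(2) length_path_edges[of ps] by auto
  ultimately show ?thesis
    unfolding is_grid_path_def by (simp add: all_set_conv_all_nth)
qed

definition row_edge :: "int \<Rightarrow> grid_edge \<Rightarrow> bool" where
  "row_edge y e \<longleftrightarrow> (\<exists>x. e = {(x, y), (x + 1, y)})"

definition top_edge :: "int \<Rightarrow> nat \<Rightarrow> grid_edge" where
  "top_edge T c = {(2 * int c, T), (2 * int c + 1, T)}"

definition tooth_edge :: "int \<Rightarrow> nat \<Rightarrow> grid_edge \<Rightarrow> bool" where
  "tooth_edge T c e \<longleftrightarrow> e = top_edge T c \<or>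
     (\<exists>x y. x \<in> {2 * int c, 2 * int c + 1} \<and> e = {(x, y), (x, y + 1)})"

definition comb_edge :: "nat set \<Rightarrow> int \<Rightarrow> int \<Rightarrow> grid_edge \<Rightarrow> bool" where
  "comb_edge C r T e \<longleftrightarrow> row_edge r e \<or> (\<exists>c\<in>C. tooth_edge T c e)"

lemma is_grid_edge_horizontal: "is_grid_edge {(x, y), (x + 1, y)}"
  unfolding is_grid_edge_def by (intro exI[of _ "(x, y)"] exI[of _ "(x + 1, y)"]) simp

lemma is_grid_edge_vertical: "is_grid_edge {(x, y), (x, y + 1)}"
  unfolding is_grid_edge_def by (intro exI[of _ "(x, y)"] exI[of _ "(x, y + 1)"]) simp

lemma is_grid_edge_top_edge: "is_grid_edge (top_edge T c)"
  unfolding top_edge_def using is_grid_edge_horizontal by simp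

lemma is_grid_edge_comb_edge: "comb_edge C r T e \<Longrightarrow> is_grid_edge e"
  unfolding comb_edge_def row_edge_def tooth_edge_def
  using is_grid_edge_horizontal is_grid_edge_vertical is_grid_edge_top_edge by blast

lemma row_edge_unique: "row_edge r e \<Longrightarrow> row_edge r' e \<Longrightarrow> r = r'"
  by (auto simp: row_edge_def doubleton_eq_iff)

lemma tooth_edge_unique: "tooth_edge T c e \<Longrightarrow> tooth_edge T' c' e \<Longrightarrow> c = c'"
  by (auto simp: tooth_edge_def top_edge_def doubleton_eq_iff)

lemma row_edge_tooth_edge_at_top: "row_edge r e \<Longrightarrow> tooth_edge T c e \<Longrightarrow> r = T"
  by (auto simp: row_edge_def tooth_edge_def top_edge_def doubleton_eq_iff)

lemma comb_edges_meet_in_common_tooth: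
  assumes "comb_edge C r T e" and "comb_edge C' r' T e" and "r \<noteq> r'" "r \<noteq> T" "r' \<noteq> T"
  shows "C \<inter> C' \<noteq> {}"
  using assms row_edge_unique row_edge_tooth_edge_at_top tooth_edge_unique
  unfolding comb_edge_def by blast

definition tooth :: "nat set \<Rightarrow> int \<Rightarrow> int \<Rightarrow> nat \<Rightarrow> grid_point list" where
  "tooth C r T c =
     (if c \<in> C then map (Pair (2 * int c)) [r..T] @ map (Pair (2 * int c + 1)) (rev [r..T])
      else [(2 * int c, r), (2 * int c + 1, r)])"

definition comb :: "nat set \<Rightarrow> int \<Rightarrow> int \<Rightarrow> nat \<Rightarrow> grid_point list" where
  "comb C r T m = concat (map (tooth C r T) [0..<m])"

lemma distinct_tooth: "distinct (tooth C r T c)"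
  by (auto simp: tooth_def distinct_map inj_on_def)

lemma fst_tooth: "p \<in> set (tooth C r T c) \<Longrightarrow> fst p \<in> {2 * int c, 2 * int c + 1}"
  by (auto simp: tooth_def split: if_splits)

lemma comb_Suc: "comb C r T (Suc m) = comb C r T m @ tooth C r T m"
  by (simp add: comb_def)

lemma fst_comb: "p \<in> set (comb C r T m) \<Longrightarrow> fst p < 2 * int m"
  using fst_tooth by (fastforce simp: comb_def)

lemma distinct_comb: "distinct (comb C r T m)"
proof (induction m)
  case (Suc m)
  have "set (comb C r T m) \<inter> set (tooth C r T m) = {}"
    using fst_comb fst_tooth by fastforce
  then show ?case
    using Suc distinct_tooth by (simp add: comb_Suc)
qed (simp add: comb_def)

context
  fixes C :: "nat set" and r T :: int
  assumes r_le_T: "r \<le> T"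
begin

lemma tooth_ends: "hd (tooth C r T c) = (2 * int c, r)" "last (tooth C r T c) = (2 * int c + 1, r)"
  using r_le_T by (auto simp: tooth_def hd_map last_map upto_rec1 upto_rec2 last_rev hd_rev)

lemma length_tooth: "2 \<le> length (tooth C r T c)"
  using r_le_T by (simp add: tooth_def) arith

lemma tooth_nonempty: "tooth C r T c \<noteq> []"
  using length_tooth[of c] by auto

lemma successively_tooth: "successively (\<lambda>a b. comb_edge C r T {a, b}) (tooth C r T c)"
proof (cases "c \<in> C")
  case True
  have step: "successively (\<lambda>y y'. y' = y + 1) [r..T]"
    by (simp add: successively_conv_nth)
  have "tooth_edge T c {(x, y), (x, y + 1)}" if "x \<in> {2 * int c, 2 * int c + 1}" for x y
    using that unfolding tooth_edge_def by blast
  then have vertical: "comb_edge C r T {(x, y), (x, y + 1)}" if "x \<in> {2 * int c, 2 * int c + 1}" for x y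
    using True that unfolding comb_edge_def by blast
  have up: "successively (\<lambda>a b. comb_edge C r T {a, b}) (map (Pair (2 * int c)) [r..T])"
    unfolding successively_map by (rule successively_mono[OF step]) (simp add: vertical)
  have down: "successively (\<lambda>a b. comb_edge C r T {a, b}) (map (Pair (2 * int c + 1)) (rev [r..T]))"
    unfolding successively_map successively_rev
    by (rule successively_mono[OF step]) (simp add: vertical insert_commute)
  have "comb_edge C r T (top_edge T c)"
    using True unfolding comb_edge_def tooth_edge_def by blast
  then show ?thesis
    using True up down r_le_T
    by (auto simp: tooth_def successively_append_iff last_map hd_map hd_rev upto_rec2 top_edge_def)
next
  case False
  then show ?thesis
    by (auto simp: tooth_def comb_edge_def row_edge_def)
qed

lemma top_edge_in_tooth: "c \<in> C \<Longrightarrow> top_edge T c \<in> set (path_edges (tooth C r T c))"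
  using r_le_T by (simp add: tooth_def upto_rec2 top_edge_def doubleton_in_path_edges)

lemma length_comb: "0 < m \<Longrightarrow> 2 \<le> length (comb C r T m)"
  using length_tooth[of "m - 1"] by (cases m) (simp_all add: comb_Suc)

lemma last_comb: "last (comb C r T (Suc m)) = (2 * int m + 1, r)"
  using tooth_ends(2)[of m] tooth_nonempty[of m] by (simp add: comb_Suc)

lemma successively_comb: "successively (\<lambda>a b. comb_edge C r T {a, b}) (comb C r T m)"
proof (induction m)
  case (Suc m)
  show ?case
  proof (cases m)
    case 0
    then show ?thesis using successively_tooth by (simp add: comb_def)
  next
    case (Suc k)
    then have "{last (comb C r T m), hd (tooth C r T m)} = {(2 * int k + 1, r), (2 * int k + 1 + 1, r)}"
      by (simp add: last_comb tooth_ends)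
    then have "comb_edge C r T {last (comb C r T m), hd (tooth C r T m)}"
      unfolding comb_edge_def row_edge_def by blast
    moreover have "comb C r T m \<noteq> []"
      using length_comb[of m] \<open>m = Suc k\<close> by auto
    ultimately show ?thesis
      using Suc.IH successively_tooth tooth_nonempty
      by (simp add: comb_Suc[where m = m] successively_append_iff)
  qed
qed (simp add: comb_def)

lemma top_edge_in_comb: "c \<in> C \<Longrightarrow> c < m \<Longrightarrow> top_edge T c \<in> set (path_edges (comb C r T m))"
proof (induction m)
  case (Suc m)
  then show ?case
    using top_edge_in_tooth set_path_edges_append[of "comb C r T m" "tooth C r T m"]
    by (cases "c = m") (auto simp: comb_Suc)
qed simp

lemma comb_edge_if_in_comb: "e \<in> set (path_edges (comb C r T m)) \<Longrightarrow> comb_edge C r T e"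
  using successively_comb ball_path_edges_iff_successively by blast

lemma is_grid_path_comb: "0 < m \<Longrightarrow> is_grid_path (path_edges (comb C r T m))"
  using distinct_comb length_comb
    successively_mono[OF successively_comb is_grid_edge_comb_edge]
  by (rule is_grid_path_path_edges)

end

lemma combs_meet_in_common_tooth:
  assumes "e \<in> set (path_edges (comb C r T m))" and "e \<in> set (path_edges (comb C' r' T m'))"
    and "r < T" and "r' < T" and "r \<noteq> r'"
  shows "C \<inter> C' \<noteq> {}"
  using assms comb_edge_if_in_comb comb_edges_meet_in_common_tooth
  by (metis less_imp_le less_irrefl)

definition is_clique :: "('a \<Rightarrow> 'a \<Rightarrow> bool) \<Rightarrow> 'a set \<Rightarrow> bool" where
  "is_clique Adj S \<longleftrightarrow> (\<forall>u\<in>S. \<forall>v\<in>S. u \<noteq> v \<longrightarrow> Adj u v)"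

lemma Helly_EPG_rep_if_cliques_share_edge:
  assumes sym: "\<And>u v. Adj u v \<Longrightarrow> Adj v u"
    and paths: "\<And>v. v \<in> V \<Longrightarrow> is_grid_path (P v)"
    and meet_adj: "\<And>u v. u \<in> V \<Longrightarrow> v \<in> V \<Longrightarrow> u \<noteq> v \<Longrightarrow> set (P u) \<inter> set (P v) \<noteq> {} \<Longrightarrow> Adj u v"
    and clique_edge: "\<And>S. S \<subseteq> V \<Longrightarrow> is_clique Adj S \<Longrightarrow> \<exists>e. is_grid_edge e \<and> (\<forall>v\<in>S. e \<in> set (P v))"
  shows "EPG_rep V Adj P \<and> Helly_rep V P"
proof
  have "set (P u) \<inter> set (P v) \<noteq> {}" if "u \<in> V" "v \<in> V" "Adj u v" for u v
  proof -
    have "is_clique Adj {u, v}"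
      using \<open>Adj u v\<close> sym unfolding is_clique_def by blast
    then show ?thesis
      using clique_edge[of "{u, v}"] that by blast
  qed
  then show "EPG_rep V Adj P"
    unfolding EPG_rep_def using paths meet_adj by blast
next
  have "is_clique Adj S" if "S \<subseteq> V" "\<forall>u\<in>S. \<forall>v\<in>S. set (P u) \<inter> set (P v) \<noteq> {}" for S
    using that meet_adj unfolding is_clique_def by blast
  then show "Helly_rep V P"
    unfolding Helly_rep_def using clique_edge by blast
qed

\<comment> \<open>The guard c < length Ks avoids the unspecified value of an out-of-range nth.\<close>
definition comb_rep :: "'a set list \<Rightarrow> ('a \<Rightarrow> int) \<Rightarrow> int \<Rightarrow> 'a \<Rightarrow> grid_edge list" where
  "comb_rep Ks row T v = path_edges (comb {c. c < length Ks \<and> v \<in> Ks ! c} (row v) T (length Ks))"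

lemma is_grid_path_comb_rep: "row v \<le> T \<Longrightarrow> Ks \<noteq> [] \<Longrightarrow> is_grid_path (comb_rep Ks row T v)"
  unfolding comb_rep_def by (simp add: is_grid_path_comb)

lemma top_edge_in_comb_rep:
  "row v \<le> T \<Longrightarrow> c < length Ks \<Longrightarrow> v \<in> Ks ! c \<Longrightarrow> top_edge T c \<in> set (comb_rep Ks row T v)"
  unfolding comb_rep_def by (simp add: top_edge_in_comb)

lemma comb_reps_meet_in_common_clique:
  assumes "set (comb_rep Ks row T u) \<inter> set (comb_rep Ks row T v) \<noteq> {}"
    and "row u < T" and "row v < T" and "row u \<noteq> row v"
  obtains K where "K \<in> set Ks" and "u \<in> K" and "v \<in> K"
proof -
  have "{c. c < length Ks \<and> u \<in> Ks ! c} \<inter> {c. c < length Ks \<and> v \<in> Ks ! c} \<noteq> {}"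
    using assms combs_meet_in_common_tooth unfolding comb_rep_def by blast
  then show ?thesis
    using that nth_mem by blast
qed

lemma EPG_rep_Helly_rep_comb_rep:
  assumes sym: "\<And>u v. Adj u v \<Longrightarrow> Adj v u"
    and Ks: "set Ks = {K. K \<subseteq> V \<and> is_clique Adj K}"
    and row_inj: "inj_on row V" and row_below: "\<And>v. v \<in> V \<Longrightarrow> row v < T"
  shows "EPG_rep V Adj (comb_rep Ks row T) \<and> Helly_rep V (comb_rep Ks row T)"
proof (rule Helly_EPG_rep_if_cliques_share_edge[OF sym])
  have "Ks \<noteq> []"
    using Ks by (auto simp: is_clique_def)
  then show "is_grid_path (comb_rep Ks row T v)" if "v \<in> V" for v
    using row_below[OF that] by (simp add: is_grid_path_comb_rep)
next
  fix u v assume "u \<in> V" "v \<in> V" "u \<noteq> v"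
    and meet: "set (comb_rep Ks row T u) \<inter> set (comb_rep Ks row T v) \<noteq> {}"
  have "row u \<noteq> row v"
    using row_inj \<open>u \<in> V\<close> \<open>v \<in> V\<close> \<open>u \<noteq> v\<close> by (auto dest: inj_onD)
  then obtain K where "K \<in> set Ks" "u \<in> K" "v \<in> K"
    using comb_reps_meet_in_common_clique[OF meet row_below[OF \<open>u \<in> V\<close>] row_below[OF \<open>v \<in> V\<close>]]
    by blast
  then show "Adj u v"
    using Ks \<open>u \<noteq> v\<close> unfolding is_clique_def by blast
next
  fix K assume "K \<subseteq> V" "is_clique Adj K"
  then obtain c where "c < length Ks" "Ks ! c = K"
    using Ks by (metis in_set_conv_nth mem_Collect_eq)
  then have "top_edge T c \<in> set (comb_rep Ks row T v)" if "v \<in> K" for v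
    using that \<open>K \<subseteq> V\<close> row_below by (intro top_edge_in_comb_rep) (auto simp: less_imp_le)
  then show "\<exists>e. is_grid_edge e \<and> (\<forall>v\<in>K. e \<in> set (comb_rep Ks row T v))"
    using is_grid_edge_top_edge by blast
qed

theorem lemma2p2:
  fixes V :: "'a set" and Adj :: "'a \<Rightarrow> 'a \<Rightarrow> bool"
  assumes "simple_graph V Adj"
  shows "\<exists>P. EPG_rep V Adj P \<and> Helly_rep V P"
proof -
  have "finite V" and sym: "\<And>u v. Adj u v \<Longrightarrow> Adj v u"
    using assms unfolding simple_graph_def by auto
  obtain f where f: "bij_betw f V {0..<card V}"
    using ex_bij_betw_finite_nat[OF \<open>finite V\<close>] by blast
  then have row_inj: "inj_on (\<lambda>v. int (f v)) V"
    and row_below: "\<And>v. v \<in> V \<Longrightarrow> int (f v) < int (card V)"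
    by (auto simp: bij_betw_def inj_on_def)
  obtain Ks where Ks: "set Ks = {K. K \<subseteq> V \<and> is_clique Adj K}"
    using finite_list[of "{K. K \<subseteq> V \<and> is_clique Adj K}"] \<open>finite V\<close> by auto
  show ?thesis
    using EPG_rep_Helly_rep_comb_rep[OF sym Ks row_inj row_below] by blast
qed

end
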